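(* Under Assumptions 2 and 3 below, the iterates of Algorithm 2Direction satisfy, for every $t\ge0$, $$\mathbb E_t\|k^{t+1}-\nabla f(z^{t+1})\|^2\le2p\,\mathbb E_t\|v^t-\nabla f(z^t)\|^2+8pL\,D_f(z^t,y^{t+1})+4pL^2\,\mathbb E_t\|x^{t+1}-y^{t+1}\|^2+(1-p)\|k^t-\nabla f(z^t)\|^2,$$ where $D_f(x,y)=f(x)-f(y)-\langle\nabla f(y),x-y\rangle$.
   Context: Setting: $f=\frac1n\sum_{i=1}^nf_i$, $f_i:\mathbb R^d\to\mathbb R$ differentiable. Assumption 2: $f$ is $L$-smooth. Assumption 3: each $f_i$ is convex and $f$ is $\mu$-strongly convex ($\mu\ge0$) with minimizer $x^*$. All compressor calls and the coins $c^t$ use independent fresh randomness. Compressor classes: $\mathbb U(\omega)$ ($\omega\ge0$) = stochastic maps $\mathcal C$ with $\mathbb E\mathcal C(x)=x$, $\mathbb E\|\mathcal C(x)-x\|^2\le\omega\|x\|^2$; $\mathbb B(\alpha)$ ($\alpha\in(0,1]$) = possibly stochastic maps with $\mathbb E\|\mathcal C(x)-x\|^2\le(1-\alpha)\|x\|^2$. Algorithm 2Direction: compressors $\mathcal C_i^{D,y},\mathcal C_i^{D,z}\in\mathbb U(\omega)$ (workers), $\mathcal C^P\in\mathbb B(\alpha)$ (server); parameters $\bar L>0$, $\mu\ge0$, $p\in(0,1]$, $\Gamma_0\ge1$, $\tau\in(0,1]$, $x^0,h_1^0,\dots,h_n^0,k^0,v^0\in\mathbb R^d$. Set $\beta=1/(\omega+1)$,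 $w^0=z^0=u^0=x^0$, $h^0=\frac1n\sum_ih_i^0$, $\theta_{\min}=\frac14\min\{1,\alpha/p,\tau/p,\beta/p\}$. For $t=0,1,\dots$: let $\bar\theta_{t+1}$ be the largest root of $p\bar L\Gamma_t\theta^2+p(\bar L+\Gamma_t\mu)\theta-(\bar L+\Gamma_t\mu)=0$, $\theta_{t+1}=\min\{\bar\theta_{t+1},\theta_{\min}\}$, $\gamma_{t+1}=p\theta_{t+1}\Gamma_t/(1-p\theta_{t+1})$, $\Gamma_{t+1}=\Gamma_t+\gamma_{t+1}$; $y^{t+1}=\theta_{t+1}w^t+(1-\theta_{t+1})z^t$; $m_i^{t,y}=\mathcal C_i^{D,y}(\nabla f_i(y^{t+1})-h_i^t)$; $g^{t+1}=h^t+\frac1n\sum_im_i^{t,y}$; $u^{t+1}=\arg\min_x\{\langle g^{t+1},x\rangle+\frac{\bar L+\Gamma_t\mu}{2\gamma_{t+1}}\|x-u^t\|^2+\frac\mu2\|x-y^{t+1}\|^2\}$; $q^{t+1}=\arg\min_x\{\langle k^t,x\rangle+\frac{\bar L+\Gamma_t\mu}{2\gamma_{t+1}}\|x-w^t\|^2+\frac\mu2\|x-y^{t+1}\|^2\}$; $w^{t+1}=q^{t+1}+\mathcal C^P(u^{t+1}-q^{t+1})$; $x^{t+1}=\theta_{t+1}u^{t+1}+(1-\theta_{t+1})z^t$; draw $c^t\sim\mathrm{Bernoulli}(p)$, and set $(k^{t+1},z^{t+1})=(v^t,x^{t+1})$ if $c^t=1$, $(k^{t+1},z^{t+1})=(k^t,z^t)$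 if $c^t=0$; $m_i^{t,z}=\mathcal C_i^{D,z}(\nabla f_i(z^{t+1})-h_i^t)$; $h_i^{t+1}=h_i^t+\beta m_i^{t,z}$; $v^{t+1}=(1-\tau)v^t+\tau(h^t+\frac1n\sum_im_i^{t,z})$; $h^{t+1}=h^t+\frac\beta n\sum_im_i^{t,z}$. $\mathbb E_t$ denotes conditional expectation given the randomness of the first $t$ iterations. *)

theory Defs
  imports "HOL-Probability.Probability"
begin

definition bregman :: "('a::real_inner \<Rightarrow> real) \<Rightarrow> ('a \<Rightarrow> 'a) \<Rightarrow> 'a \<Rightarrow> 'a \<Rightarrow> real" where
  "bregman f gf x y = f x - f y - inner (gf y) (x - y)"

definition is_gradient :: "('a::real_inner \<Rightarrow> real) \<Rightarrow> ('a \<Rightarrow> 'a) \<Rightarrow> bool" where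
  "is_gradient f gf \<longleftrightarrow> (\<forall>x. (f has_derivative (\<lambda>h. inner (gf x) h)) (at x))"

definition L_smooth :: "('a::real_inner \<Rightarrow> 'a) \<Rightarrow> real \<Rightarrow> bool" where
  "L_smooth gf L \<longleftrightarrow> (\<forall>x y. norm (gf x - gf y) \<le> L * norm (x - y))"

definition strongly_convex :: "('a::real_inner \<Rightarrow> real) \<Rightarrow> ('a \<Rightarrow> 'a) \<Rightarrow> real \<Rightarrow> bool" where
  "strongly_convex f gf mu \<longleftrightarrow>
     (\<forall>x y. f y \<ge> f x + inner (gf x) (y - x) + mu / 2 * (norm (y - x))\<^sup>2)"

definition theta_bar :: "real \<Rightarrow> real \<Rightarrow> real \<Rightarrow> real \<Rightarrow> real" where
  "theta_bar Lbar mu p Gam =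
     (GREATEST \<theta>::real. p * Lbar * Gam * \<theta>\<^sup>2 + p * (Lbar + Gam * mu) * \<theta> - (Lbar + Gam * mu) = 0)"

definition theta_min :: "real \<Rightarrow> real \<Rightarrow> real \<Rightarrow> real \<Rightarrow> real" where
  "theta_min alpha tau omega p =
     1/4 * min 1 (min (alpha / p) (min (tau / p) ((1 / (omega + 1)) / p)))"

definition theta_next :: "real \<Rightarrow> real \<Rightarrow> real \<Rightarrow> real \<Rightarrow> real \<Rightarrow> real \<Rightarrow> real \<Rightarrow> real" where
  "theta_next Lbar mu p Gam alpha tau omega =
     min (theta_bar Lbar mu p Gam) (theta_min alpha tau omega p)"

definition gamma_next :: "real \<Rightarrow> real \<Rightarrow> real \<Rightarrow> real" where
  "gamma_next p \<theta> Gam = p * \<theta> * Gam / (1 - p * \<theta>)"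

definition prox_step :: "'a::real_inner \<Rightarrow> real \<Rightarrow> real \<Rightarrow> 'a \<Rightarrow> 'a \<Rightarrow> 'a" where
  "prox_step g c mu u y =
     arg_min (\<lambda>x. inner g x + c / 2 * (norm (x - u))\<^sup>2 + mu / 2 * (norm (x - y))\<^sup>2) (\<lambda>_. True)"

end

theory Submission
  imports Defs
begin

(* On the event c = 1 of the coin, k' = v and z' = x'.  Splitting v - grad f x' through
   grad f z and grad f y with |a + b|^2 <= 2|a|^2 + 2|b|^2 gives
     2 |v - grad f z|^2 + 4 |grad f z - grad f y|^2 + 4 |grad f y - grad f x'|^2;
   the middle term is at most 2 L D_f(z, y) by cocoercivity of the gradient of a convex
   L-smooth function, and the last one at most L^2 |x' - y|^2.  On c = 0 nothing moves.
   Averaging over the coin gives the claim.  The remaining work is integrability of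
   |x' - y|^2: the prox step has a closed form, so x' is an affine function of the
   compressed messages, which are square integrable by the variance bound.  The step-size
   schedule matters only through gamma > 0, which makes the prox objective strongly convex. *)

lemma norm_add_power2_le:
  fixes a b :: "'a::real_normed_vector"
  shows "(norm (a + b))\<^sup>2 \<le> 2 * (norm a)\<^sup>2 + 2 * (norm b)\<^sup>2"
proof -
  have "(norm (a + b))\<^sup>2 \<le> (norm a + norm b)\<^sup>2"
    by (simp add: norm_triangle_ineq power_mono)
  also have "\<dots> \<le> 2 * (norm a)\<^sup>2 + 2 * (norm b)\<^sup>2"
    using sum_squares_ge_zero[of "norm a - norm b" 0] by (simp add: power2_eq_square algebra_simps)
  finally show ?thesis .
qed

lemma L_smooth_power2:
  assumes "L_smooth gf L" "L \<ge> 0"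
  shows "(norm (gf x - gf y))\<^sup>2 \<le> L\<^sup>2 * (norm (x - y))\<^sup>2"
proof -
  have "(norm (gf x - gf y))\<^sup>2 \<le> (L * norm (x - y))\<^sup>2"
    using assms unfolding L_smooth_def by (intro power_mono) auto
  then show ?thesis
    by (simp add: power_mult_distrib)
qed

lemma L_smooth_nonneg:
  fixes gf :: "'a::euclidean_space \<Rightarrow> 'a"
  assumes "L_smooth gf L"
  shows "L \<ge> 0"
proof -
  obtain b :: 'a where "b \<in> Basis" using nonempty_Basis by blast
  have "0 \<le> L * norm (b - 0)"
    using assms unfolding L_smooth_def by (meson norm_ge_zero order_trans)
  with \<open>b \<in> Basis\<close> show ?thesis by simp
qed

lemma is_gradient_average:
  assumes "\<And>i. i < n \<Longrightarrow> is_gradient (fi i) (gfi i)"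
  shows "is_gradient (\<lambda>x. (\<Sum>i<n. fi i x) / real n) (\<lambda>x. (1 / real n) *\<^sub>R (\<Sum>i<n. gfi i x))"
  unfolding is_gradient_def
proof
  fix x
  have "((\<lambda>x. \<Sum>i<n. fi i x) has_derivative (\<lambda>h. \<Sum>i<n. inner (gfi i x) h)) (at x)"
    using assms by (intro has_derivative_sum) (auto simp: is_gradient_def)
  from has_derivative_scaleR_right[OF this, of "1 / real n"]
  have "((\<lambda>x. (\<Sum>i<n. fi i x) / real n) has_derivative (\<lambda>h. (\<Sum>i<n. inner (gfi i x) h) / real n)) (at x)"
    by (simp add: divide_inverse mult.commute)
  then show "((\<lambda>x. (\<Sum>i<n. fi i x) / real n) has_derivative
      (\<lambda>h. inner ((1 / real n) *\<^sub>R (\<Sum>i<n. gfi i x)) h)) (at x)"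
    by (simp add: inner_sum_left)
qed

lemma strongly_convex_mono:
  fixes f :: "'a::real_inner \<Rightarrow> real"
  assumes "strongly_convex f gf mu" "mu' \<le> mu"
  shows "strongly_convex f gf mu'"
  unfolding strongly_convex_def
proof (intro allI)
  fix x y :: 'a
  have "mu' / 2 * (norm (y - x))\<^sup>2 \<le> mu / 2 * (norm (y - x))\<^sup>2"
    using assms(2) by (intro mult_right_mono) auto
  with assms(1) show "f x + inner (gf x) (y - x) + mu' / 2 * (norm (y - x))\<^sup>2 \<le> f y"
    unfolding strongly_convex_def by (smt (verit))
qed

lemma L_smooth_descent:
  assumes grad: "is_gradient f gf" and smooth: "L_smooth gf L"
  shows "f (x + h) \<le> f x + inner (gf x) h + L / 2 * (norm h)\<^sup>2"
proof -
  define \<psi> where "\<psi> = (\<lambda>s::real. f (x + s *\<^sub>R h) - s * inner (gf x) h - L / 2 * s\<^sup>2 * (norm h)\<^sup>2)"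
  have "\<psi> 1 \<le> \<psi> 0"
  proof (rule DERIV_nonpos_imp_nonincreasing[of 0 1])
    fix s :: real assume s: "0 \<le> s" "s \<le> 1"
    have "((\<lambda>s. x + s *\<^sub>R h) has_derivative (\<lambda>t. t *\<^sub>R h)) (at s)"
      by (auto intro!: derivative_eq_intros)
    from has_derivative_compose[OF this grad[unfolded is_gradient_def, rule_format]]
    have "((\<lambda>s. f (x + s *\<^sub>R h)) has_derivative (\<lambda>t. inner (gf (x + s *\<^sub>R h)) (t *\<^sub>R h))) (at s)"
      by (simp add: o_def)
    then have "((\<lambda>s. f (x + s *\<^sub>R h)) has_real_derivative inner (gf (x + s *\<^sub>R h)) h) (at s)"
      by (simp add: has_field_derivative_def mult.commute[of _ "inner _ _"])
    then have deriv: "(\<psi> has_real_derivative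
        inner (gf (x + s *\<^sub>R h) - gf x) h - L * s * (norm h)\<^sup>2) (at s)"
      unfolding \<psi>_def by (auto intro!: derivative_eq_intros simp: inner_diff_left)
    have "inner (gf (x + s *\<^sub>R h) - gf x) h \<le> norm (gf (x + s *\<^sub>R h) - gf x) * norm h"
      by (rule norm_cauchy_schwarz)
    also have "\<dots> \<le> L * norm (s *\<^sub>R h) * norm h"
      using smooth unfolding L_smooth_def by (intro mult_right_mono) (metis add_diff_cancel_left', simp)
    also have "\<dots> = L * s * (norm h)\<^sup>2"
      using s by (simp add: power2_eq_square)
    finally show "\<exists>y. (\<psi> has_real_derivative y) (at s) \<and> y \<le> 0"
      using deriv by auto
  qed simp
  then show ?thesis
    unfolding \<psi>_def by simp
qed

lemma norm_gradient_diff_le_bregman: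
  assumes grad: "is_gradient f gf" and smooth: "L_smooth gf L"
    and convex: "strongly_convex f gf 0" and L: "L \<ge> 0"
  shows "(norm (gf z - gf y))\<^sup>2 \<le> 2 * L * bregman f gf z y"
proof (cases "L = 0")
  case True
  then show ?thesis
    using L_smooth_power2[OF smooth L, of z y] by simp
next
  case False
  with L have L_pos: "L > 0" by simp
  define d where "d = gf z - gf y"
  define w where "w = z - (1 / L) *\<^sub>R d"
  have "f y + inner (gf y) (w - y) \<le> f w"
    using convex unfolding strongly_convex_def by simp
  moreover have "f w \<le> f z + inner (gf z) (w - z) + L / 2 * (norm (w - z))\<^sup>2"
    using L_smooth_descent[OF grad smooth, of z "w - z"] by simp
  ultimately have "inner (gf y - gf z) (w - z) - L / 2 * (norm (w - z))\<^sup>2 \<le> bregman f gf z y"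
    unfolding bregman_def by (simp add: inner_diff_left inner_diff_right)
  moreover have "inner (gf y - gf z) (w - z) - L / 2 * (norm (w - z))\<^sup>2 = (norm d)\<^sup>2 / (2 * L)"
  proof -
    have "w - z = - (1 / L) *\<^sub>R d" and "gf y - gf z = - d"
      unfolding w_def d_def by simp_all
    then have "inner (gf y - gf z) (w - z) - L / 2 * (norm (w - z))\<^sup>2
        = (1 / L) * (norm d)\<^sup>2 - L / 2 * ((1 / L)\<^sup>2 * (norm d)\<^sup>2)"
      using L_pos by (simp add: dot_square_norm power_divide)
    with L_pos show ?thesis
      by (simp add: power2_eq_square field_simps)
  qed
  ultimately have "(norm d)\<^sup>2 / (2 * L) \<le> bregman f gf z y"
    by simp
  then show ?thesis
    unfolding d_def using L_pos by (simp add: pos_divide_le_eq mult.commute)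
qed

lemma norm_diff_gradient_le:
  assumes grad: "is_gradient f gf" and smooth: "L_smooth gf L"
    and convex: "strongly_convex f gf 0" and L: "L \<ge> 0"
  shows "(norm (v - gf x))\<^sup>2
    \<le> 2 * (norm (v - gf z))\<^sup>2 + 8 * L * bregman f gf z y + 4 * L\<^sup>2 * (norm (x - y))\<^sup>2"
proof -
  have "(norm (v - gf x))\<^sup>2 \<le> 2 * (norm (v - gf z))\<^sup>2 + 2 * (norm (gf z - gf x))\<^sup>2"
    using norm_add_power2_le[of "v - gf z" "gf z - gf x"] by simp
  moreover have "(norm (gf z - gf x))\<^sup>2 \<le> 2 * (norm (gf z - gf y))\<^sup>2 + 2 * (norm (gf y - gf x))\<^sup>2"
    using norm_add_power2_le[of "gf z - gf y" "gf y - gf x"] by simp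
  moreover have "(norm (gf y - gf x))\<^sup>2 \<le> L\<^sup>2 * (norm (x - y))\<^sup>2"
    using L_smooth_power2[OF smooth L, of y x] by (simp add: norm_minus_commute)
  ultimately show ?thesis
    using norm_gradient_diff_le_bregman[OF grad smooth convex L, of z y] by linarith
qed

lemma greatest_root_quadratic_pos:
  fixes a b c :: real
  assumes a: "a > 0" and c: "c > 0"
  shows "(GREATEST x. a * x\<^sup>2 + b * x - c = 0) > 0"
proof -
  define s where "s = sqrt (b\<^sup>2 + 4 * a * c)"
  have s2: "s\<^sup>2 = b\<^sup>2 + 4 * a * c"
    unfolding s_def using a c by simp
  have "\<bar>b\<bar> < s"
    unfolding s_def using a c by (intro real_less_rsqrt) simp
  define r where "r = (s - b) / (2 * a)"
  have r_pos: "r > 0"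
    unfolding r_def using a \<open>\<bar>b\<bar> < s\<close> by simp
  have r_root: "a * r\<^sup>2 + b * r - c = 0"
    unfolding r_def using a s2 by (simp add: field_simps power2_eq_square)
  have "(GREATEST x. a * x\<^sup>2 + b * x - c = 0) = r"
  proof (rule Greatest_equality)
    fix y assume y_root: "a * y\<^sup>2 + b * y - c = 0"
    show "y \<le> r"
    proof (rule ccontr)
      assume "\<not> y \<le> r"
      have "a * (y + r) + b > s"
        using \<open>\<not> y \<le> r\<close> a r_def by (simp add: field_simps)
      then have "(y - r) * (a * (y + r) + b) > 0"
        using \<open>\<not> y \<le> r\<close> \<open>\<bar>b\<bar> < s\<close> by (intro mult_pos_pos) auto
      moreover have "(y - r) * (a * (y + r) + b) = 0"
        using y_root r_root by (simp add: algebra_simps power2_eq_square)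
      ultimately show False by simp
    qed
  qed (fact r_root)
  with r_pos show ?thesis by simp
qed

lemma gamma_next_theta_next_pos:
  assumes "Lbar > 0" "0 < p" "p \<le> 1" "Gam \<ge> 1" "mu \<ge> 0"
    and "alpha > 0" "tau > 0" "omega \<ge> 0"
  shows "gamma_next p (theta_next Lbar mu p Gam alpha tau omega) Gam > 0"
proof -
  define \<theta> where "\<theta> = theta_next Lbar mu p Gam alpha tau omega"
  have "theta_bar Lbar mu p Gam > 0"
    unfolding theta_bar_def using assms
    by (intro greatest_root_quadratic_pos) (auto intro: add_pos_nonneg)
  moreover have "theta_min alpha tau omega p > 0"
    unfolding theta_min_def using assms by simp
  ultimately have "\<theta> > 0"
    unfolding \<theta>_def theta_next_def by simp
  moreover have "\<theta> \<le> 1/4"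
    unfolding \<theta>_def theta_next_def theta_min_def by linarith
  ultimately have "p * \<theta> < 1"
    using assms mult_mono[of p 1 \<theta> "1/4"] by auto
  then show ?thesis
    using assms \<open>\<theta> > 0\<close> unfolding \<theta>_def[symmetric] gamma_next_def by simp
qed

lemma prox_step_closed_form:
  fixes g u y :: "'a::real_inner"
  assumes pos: "c + mu > 0"
  shows "prox_step g c mu u y = (1 / (c + mu)) *\<^sub>R (c *\<^sub>R u + mu *\<^sub>R y - g)"
proof -
  define x0 where "x0 = (1 / (c + mu)) *\<^sub>R (c *\<^sub>R u + mu *\<^sub>R y - g)"
  define \<phi> where "\<phi> = (\<lambda>x. inner g x + c / 2 * (norm (x - u))\<^sup>2 + mu / 2 * (norm (x - y))\<^sup>2)"
  have stationary: "g + c *\<^sub>R (x0 - u) + mu *\<^sub>R (x0 - y) = 0"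
  proof -
    have "(c + mu) *\<^sub>R x0 = c *\<^sub>R u + mu *\<^sub>R y - g"
      unfolding x0_def using pos by simp
    then show ?thesis by (simp add: algebra_simps)
  qed
  have expand: "\<phi> (x0 + d) = \<phi> x0 + (c + mu) / 2 * (norm d)\<^sup>2" for d
  proof -
    have "\<phi> (x0 + d)
        = \<phi> x0 + inner (g + c *\<^sub>R (x0 - u) + mu *\<^sub>R (x0 - y)) d + (c + mu) / 2 * (norm d)\<^sup>2"
      unfolding \<phi>_def power2_norm_eq_inner
      by (simp add: inner_commute algebra_simps)
    with stationary show ?thesis by simp
  qed
  have minimal: "\<phi> x0 \<le> \<phi> x" for x
    using expand[of "x - x0"] pos by simp
  have unique: "x = x0" if "\<phi> x \<le> \<phi> x0" for x
    using expand[of "x - x0"] pos that by (simp add: mult_le_0_iff)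
  have "arg_min \<phi> (\<lambda>_. True) = x0"
    by (rule arg_minI[where P = "\<lambda>_. True" and x = x0 and Q = "\<lambda>x. x = x0"])
      (auto simp: not_less minimal intro: unique)
  then show ?thesis
    unfolding prox_step_def \<phi>_def x0_def .
qed

lemma integrable_norm_power2_add:
  fixes f g :: "'w \<Rightarrow> 'a::{real_normed_vector, second_countable_topology}"
  assumes [measurable]: "f \<in> borel_measurable M" "g \<in> borel_measurable M"
    and "integrable M (\<lambda>\<omega>. (norm (f \<omega>))\<^sup>2)" "integrable M (\<lambda>\<omega>. (norm (g \<omega>))\<^sup>2)"
  shows "integrable M (\<lambda>\<omega>. (norm (f \<omega> + g \<omega>))\<^sup>2)"
proof (rule Bochner_Integration.integrable_bound)
  show "integrable M (\<lambda>\<omega>. 2 * (norm (f \<omega>))\<^sup>2 + 2 * (norm (g \<omega>))\<^sup>2)"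
    using assms by auto
  show "AE \<omega> in M. norm ((norm (f \<omega> + g \<omega>))\<^sup>2)
      \<le> norm (2 * (norm (f \<omega>))\<^sup>2 + 2 * (norm (g \<omega>))\<^sup>2)"
    using norm_add_power2_le by (intro AE_I2) simp
qed measurable

lemma integrable_norm_power2_sum:
  fixes f :: "'i \<Rightarrow> 'w \<Rightarrow> 'a::{real_normed_vector, second_countable_topology}"
  assumes "finite I" "\<And>i. i \<in> I \<Longrightarrow> f i \<in> borel_measurable M"
    and "\<And>i. i \<in> I \<Longrightarrow> integrable M (\<lambda>\<omega>. (norm (f i \<omega>))\<^sup>2)"
  shows "integrable M (\<lambda>\<omega>. (norm (\<Sum>i\<in>I. f i \<omega>))\<^sup>2)"
  using assms
proof (induction I rule: finite_induct)
  case (insert j I)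
  then show ?case
    by (simp add: integrable_norm_power2_add borel_measurable_sum)
qed simp

lemma (in finite_measure) integrable_norm_power2_affine:
  fixes f :: "'a \<Rightarrow> 'b::{real_normed_vector, second_countable_topology}"
  assumes "f \<in> borel_measurable M" "integrable M (\<lambda>\<omega>. (norm (f \<omega>))\<^sup>2)"
  shows "integrable M (\<lambda>\<omega>. (norm (a + c *\<^sub>R f \<omega>))\<^sup>2)"
  using assms by (intro integrable_norm_power2_add) (auto simp: power_mult_distrib)

lemma (in finite_measure) integrable_norm_power2_affine_sum:
  fixes f :: "'i \<Rightarrow> 'a \<Rightarrow> 'b::{real_normed_vector, second_countable_topology}"
  assumes "finite I" "\<And>i. i \<in> I \<Longrightarrow> f i \<in> borel_measurable M"
    and "\<And>i. i \<in> I \<Longrightarrow> integrable M (\<lambda>\<omega>. (norm (f i \<omega> - m i))\<^sup>2)"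
  shows "integrable M (\<lambda>\<omega>. (norm (a + b *\<^sub>R (\<Sum>i\<in>I. f i \<omega>)))\<^sup>2)"
proof -
  have "integrable M (\<lambda>\<omega>. (norm (f i \<omega>))\<^sup>2)" if "i \<in> I" for i
    using integrable_norm_power2_affine[of "\<lambda>\<omega>. f i \<omega> - m i" "m i" 1] assms(2,3) that by simp
  with assms show ?thesis
    by (intro integrable_norm_power2_affine integrable_norm_power2_sum borel_measurable_sum) auto
qed

lemma integrable_pair_measure_bernoulli_if:
  fixes A B :: "'w \<Rightarrow> real"
  assumes "prob_space N" "integrable N A" "integrable N B"
  shows "integrable (N \<Otimes>\<^sub>M bernoulli_pmf p) (\<lambda>\<xi>. if snd \<xi> then A (fst \<xi>) else B (fst \<xi>))"
proof -
  interpret pair_sigma_finite N "measure_pmf (bernoulli_pmf p)"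
    using assms(1) by (intro pair_sigma_finite.intro prob_space_imp_sigma_finite prob_space_measure_pmf)
  have [measurable]: "A \<in> borel_measurable N" "B \<in> borel_measurable N"
    using assms by auto
  have "integrable (measure_pmf (bernoulli_pmf p)) g" for g :: "bool \<Rightarrow> real"
    by (rule integrable_measure_pmf_finite) simp
  moreover have "integrable N (\<lambda>\<omega>. \<integral>c. norm (if snd (\<omega>, c) then A (fst (\<omega>, c))
      else B (fst (\<omega>, c))) \<partial>bernoulli_pmf p)"
    using assms by (simp add: integral_measure_pmf[of UNIV] UNIV_bool)
  ultimately show ?thesis
    by (intro Fubini_integrable) auto
qed

lemma integral_pair_measure_bernoulli_if:
  fixes A B :: "'w \<Rightarrow> real"
  assumes "prob_space N" "integrable N A" "integrable N B" "0 \<le> p" "p \<le> 1"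
  shows "(\<integral>\<xi>. (if snd \<xi> then A (fst \<xi>) else B (fst \<xi>)) \<partial>(N \<Otimes>\<^sub>M bernoulli_pmf p))
    = p * integral\<^sup>L N A + (1 - p) * integral\<^sup>L N B"
proof -
  interpret pair_sigma_finite N "measure_pmf (bernoulli_pmf p)"
    using assms(1) by (intro pair_sigma_finite.intro prob_space_imp_sigma_finite prob_space_measure_pmf)
  have "(\<integral>\<xi>. (if snd \<xi> then A (fst \<xi>) else B (fst \<xi>)) \<partial>(N \<Otimes>\<^sub>M bernoulli_pmf p))
      = (\<integral>\<omega>. p * A \<omega> + (1 - p) * B \<omega> \<partial>N)"
    using integral_fst'[OF integrable_pair_measure_bernoulli_if[OF assms(1-3)]] assms(4,5)
    by (simp add: mult.commute)
  also have "\<dots> = p * integral\<^sup>L N A + (1 - p) * integral\<^sup>L N B"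
    using assms by simp
  finally show ?thesis .
qed

(* No measurability of F is needed: a non-integrable F has integral 0. *)
lemma integral_pair_measure_bernoulli_le:
  fixes F :: "'w \<times> bool \<Rightarrow> real"
  assumes "prob_space N" "integrable N A" "integrable N B" "0 \<le> p" "p \<le> 1"
    and le: "\<And>\<omega> c. F (\<omega>, c) \<le> (if c then A \<omega> else B \<omega>)" and nonneg: "\<And>\<xi>. 0 \<le> F \<xi>"
  shows "(\<integral>\<xi>. F \<xi> \<partial>(N \<Otimes>\<^sub>M bernoulli_pmf p))
    \<le> p * integral\<^sup>L N A + (1 - p) * integral\<^sup>L N B"
proof -
  have "(\<integral>\<xi>. F \<xi> \<partial>(N \<Otimes>\<^sub>M bernoulli_pmf p))
      \<le> (\<integral>\<xi>. (if snd \<xi> then A (fst \<xi>) else B (fst \<xi>)) \<partial>(N \<Otimes>\<^sub>M bernoulli_pmf p))"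
  proof (rule integral_mono')
    show "F \<xi> \<le> (if snd \<xi> then A (fst \<xi>) else B (fst \<xi>))" for \<xi>
      using le[of "fst \<xi>" "snd \<xi>"] by simp
    then show "0 \<le> (if snd \<xi> then A (fst \<xi>) else B (fst \<xi>))" for \<xi>
      using nonneg order_trans by blast
  qed (rule integrable_pair_measure_bernoulli_if[OF assms(1-3)])
  also have "\<dots> = p * integral\<^sup>L N A + (1 - p) * integral\<^sup>L N B"
    by (rule integral_pair_measure_bernoulli_if[OF assms(1-5)])
  finally show ?thesis .
qed

theorem lemma9:
  fixes n :: nat
    and fi :: "nat \<Rightarrow> 'a::euclidean_space \<Rightarrow> real"
    and gfi :: "nat \<Rightarrow> 'a \<Rightarrow> 'a"
    and L mu Lbar p tau alpha omega Gam :: real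
    and w z u k v :: 'a
    and h :: "nat \<Rightarrow> 'a"
    and N :: "'w measure"
    and my :: "nat \<Rightarrow> 'w \<Rightarrow> 'a"
    and f :: "'a \<Rightarrow> real" and gf :: "'a \<Rightarrow> 'a" and hbar y1 :: 'a
    and \<theta> \<gamma> :: real and inp :: "nat \<Rightarrow> 'a"
    and g1 u1 x1 :: "'w \<Rightarrow> 'a" and k1 z1 :: "'w \<times> bool \<Rightarrow> 'a"
    and \<Omega> :: "('w \<times> bool) measure"
  assumes f_def: "f = (\<lambda>x. (\<Sum>i<n. fi i x) / real n)"
    and gf_def: "gf = (\<lambda>x. (1 / real n) *\<^sub>R (\<Sum>i<n. gfi i x))"
    and "hbar = (1 / real n) *\<^sub>R (\<Sum>i<n. h i)"
    and "\<theta> = theta_next Lbar mu p Gam alpha tau omega"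
    and "\<gamma> = gamma_next p \<theta> Gam"
    and "y1 = \<theta> *\<^sub>R w + (1 - \<theta>) *\<^sub>R z"
    and "inp = (\<lambda>i. gfi i y1 - h i)"
    and "g1 = (\<lambda>\<omega>. hbar + (1 / real n) *\<^sub>R (\<Sum>i<n. my i \<omega>))"
    and "u1 = (\<lambda>\<omega>. prox_step (g1 \<omega>) ((Lbar + Gam * mu) / \<gamma>) mu u y1)"
    and "x1 = (\<lambda>\<omega>. \<theta> *\<^sub>R u1 \<omega> + (1 - \<theta>) *\<^sub>R z)"
    and "k1 = (\<lambda>(\<omega>, c::bool). if c then v else k)"
    and "z1 = (\<lambda>(\<omega>, c::bool). if c then x1 \<omega> else z)"
    and "\<Omega> = N \<Otimes>\<^sub>M measure_pmf (bernoulli_pmf p)"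
    and n_pos: "n \<ge> 1"
    and grad: "\<And>i. i < n \<Longrightarrow> is_gradient (fi i) (gfi i)"
    and smooth: "L_smooth gf L"
    and conv_i: "\<And>i. i < n \<Longrightarrow> convex_on UNIV (fi i)"
    and mu_nonneg: "mu \<ge> 0"
    and strong: "strongly_convex f gf mu"
    and minimizer: "\<exists>xstar. \<forall>x. f xstar \<le> f x"
    and Lbar_pos: "Lbar > 0"
    and p_range: "0 < p" "p \<le> 1"
    and tau_range: "0 < tau" "tau \<le> 1"
    and alpha_range: "0 < alpha" "alpha \<le> 1"
    and omega_nonneg: "omega \<ge> 0"
    and Gam_ge: "Gam \<ge> 1"
    and N_prob: "prob_space N"
    and my_meas: "\<And>i. i < n \<Longrightarrow> my i \<in> borel_measurable N"
    and my_indep: "prob_space.indep_vars N (\<lambda>_. borel) my {..<n}"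
    and my_int: "\<And>i. i < n \<Longrightarrow> integrable N (my i)"
    and my_unbiased: "\<And>i. i < n \<Longrightarrow> (\<integral>\<omega>. my i \<omega> \<partial>N) = inp i"
    and my_var_int: "\<And>i. i < n \<Longrightarrow> integrable N (\<lambda>\<omega>. (norm (my i \<omega> - inp i))\<^sup>2)"
    and my_var: "\<And>i. i < n \<Longrightarrow> (\<integral>\<omega>. (norm (my i \<omega> - inp i))\<^sup>2 \<partial>N) \<le> omega * (norm (inp i))\<^sup>2"
  shows "(\<integral>\<xi>. (norm (k1 \<xi> - gf (z1 \<xi>)))\<^sup>2 \<partial>\<Omega>)
         \<le> 2 * p * (norm (v - gf z))\<^sup>2
           + 8 * p * L * bregman f gf z y1
           + 4 * p * L\<^sup>2 * (\<integral>\<xi>. (norm (x1 (fst \<xi>) - y1))\<^sup>2 \<partial>\<Omega>)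
           + (1 - p) * (norm (k - gf z))\<^sup>2"
proof -
  interpret N: prob_space N by (fact N_prob)
  note \<theta>_eq = assms(4) and \<gamma>_eq = assms(5) and g1_eq = assms(8) and u1_eq = assms(9)
    and x1_eq = assms(10) and k1_eq = assms(11) and z1_eq = assms(12) and \<Omega>_eq = assms(13)
  have grad_f: "is_gradient f gf"
    unfolding f_def gf_def using grad by (rule is_gradient_average)
  have L_nonneg: "L \<ge> 0"
    using smooth by (rule L_smooth_nonneg)
  have convex: "strongly_convex f gf 0"
    using strong mu_nonneg by (rule strongly_convex_mono)
  define c where "c = (Lbar + Gam * mu) / \<gamma>"
  have "\<gamma> > 0"
    unfolding \<gamma>_eq \<theta>_eq using assms by (intro gamma_next_theta_next_pos) auto
  then have "c + mu > 0"
    unfolding c_def using Lbar_pos Gam_ge mu_nonneg by (simp add: add_pos_nonneg)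
  then have x1_affine: "x1 \<omega> - y1 = (\<theta> *\<^sub>R prox_step hbar c mu u y1 + (1 - \<theta>) *\<^sub>R z - y1)
      + (- \<theta> / (c + mu) / real n) *\<^sub>R (\<Sum>i<n. my i \<omega>)" for \<omega>
    unfolding x1_eq u1_eq g1_eq c_def[symmetric] by (simp add: prox_step_closed_form algebra_simps)
  have X_int: "integrable N (\<lambda>\<omega>. (norm (x1 \<omega> - y1))\<^sup>2)"
    unfolding x1_affine using my_meas my_var_int by (intro N.integrable_norm_power2_affine_sum) auto
  define C where "C = (\<lambda>\<omega>. 2 * (norm (v - gf z))\<^sup>2 + 8 * L * bregman f gf z y1
    + 4 * L\<^sup>2 * (norm (x1 \<omega> - y1))\<^sup>2)"
  have "(\<integral>\<xi>. (norm (k1 \<xi> - gf (z1 \<xi>)))\<^sup>2 \<partial>\<Omega>)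
      \<le> p * integral\<^sup>L N C + (1 - p) * (\<integral>\<omega>. (norm (k - gf z))\<^sup>2 \<partial>N)"
    unfolding \<Omega>_eq using N_prob X_int p_range norm_diff_gradient_le[OF grad_f smooth convex L_nonneg]
    by (intro integral_pair_measure_bernoulli_le) (auto simp: C_def k1_eq z1_eq)
  moreover have "(\<integral>\<xi>. (norm (x1 (fst \<xi>) - y1))\<^sup>2 \<partial>\<Omega>) = (\<integral>\<omega>. (norm (x1 \<omega> - y1))\<^sup>2 \<partial>N)"
    unfolding \<Omega>_eq using integral_pair_measure_bernoulli_if[OF N_prob X_int X_int] p_range
    by (simp add: algebra_simps)
  ultimately show ?thesis
    unfolding C_def using X_int by (simp add: N.prob_space algebra_simps)
qed

end
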